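(* For every flag complex $\Delta$ there exists a vertex-decomposable flag complex $\Gamma$ whose $h$-vector, with trailing zeros removed, equals the face vector of $\Delta$.
   Context: A flag complex is a simplicial complex all of whose minimal non-faces have two elements, equivalently the independence complex of a graph. Face vector: $(f_{-1},\ldots,f_{d-1})$, $f_i$ = number of faces with $i+1$ elements, for a $(d-1)$-dimensional complex; $h$-vector: $(h_0,\ldots,h_d)$ with $h_j=\sum_{i=0}^{j}(-1)^{j-i}\binom{d-i}{j-i}f_{i-1}$. A pure complex $\Delta$ is vertex-decomposable if it is a simplex or has a vertex $v$ with $\mathrm{link}_\Delta v=\{\tau\in\Delta: v\notin\tau,\ \tau\cup\{v\}\in\Delta\}$ and $\mathrm{del}_\Delta v=\{\tau\in\Delta: v\notin\tau\}$ both pure and vertex-decomposable. *)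

theory Defs
  imports Main
begin

definition simplicial_complex :: "'a set set \<Rightarrow> bool" where
  "simplicial_complex \<Delta> \<longleftrightarrow> finite \<Delta> \<and> {} \<in> \<Delta> \<and> (\<forall>\<sigma>\<in>\<Delta>. finite \<sigma>)
     \<and> (\<forall>\<sigma>\<in>\<Delta>. \<forall>\<tau>. \<tau> \<subseteq> \<sigma> \<longrightarrow> \<tau> \<in> \<Delta>)"

definition vertices :: "'a set set \<Rightarrow> 'a set" where
  "vertices \<Delta> = \<Union>\<Delta>"

definition minimal_nonface :: "'a set set \<Rightarrow> 'a set \<Rightarrow> bool" where
  "minimal_nonface \<Delta> \<sigma> \<longleftrightarrow> \<sigma> \<subseteq> vertices \<Delta> \<and> \<sigma> \<notin> \<Delta> \<and> (\<forall>\<tau>. \<tau> \<subset> \<sigma> \<longrightarrow> \<tau> \<in> \<Delta>)"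

definition flag_complex :: "'a set set \<Rightarrow> bool" where
  "flag_complex \<Delta> \<longleftrightarrow> simplicial_complex \<Delta> \<and>
     (\<forall>\<sigma>. minimal_nonface \<Delta> \<sigma> \<longrightarrow> card \<sigma> = 2)"

definition facets :: "'a set set \<Rightarrow> 'a set set" where
  "facets \<Delta> = {\<sigma>\<in>\<Delta>. \<forall>\<tau>\<in>\<Delta>. \<sigma> \<subseteq> \<tau> \<longrightarrow> \<tau> = \<sigma>}"

definition pure :: "'a set set \<Rightarrow> bool" where
  "pure \<Delta> \<longleftrightarrow> (\<forall>\<sigma>\<in>facets \<Delta>. \<forall>\<tau>\<in>facets \<Delta>. card \<sigma> = card \<tau>)"

definition link :: "'a set set \<Rightarrow> 'a \<Rightarrow> 'a set set" where
  "link \<Delta> v = {\<tau>\<in>\<Delta>. v \<notin> \<tau> \<and> insert v \<tau> \<in> \<Delta>}"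

definition del :: "'a set set \<Rightarrow> 'a \<Rightarrow> 'a set set" where
  "del \<Delta> v = {\<tau>\<in>\<Delta>. v \<notin> \<tau>}"

inductive vertex_decomposable :: "'a set set \<Rightarrow> bool" where
  simplex: "finite S \<Longrightarrow> vertex_decomposable (Pow S)"
| step: "pure \<Delta> \<Longrightarrow> v \<in> vertices \<Delta> \<Longrightarrow> pure (link \<Delta> v) \<Longrightarrow> pure (del \<Delta> v)
    \<Longrightarrow> vertex_decomposable (link \<Delta> v) \<Longrightarrow> vertex_decomposable (del \<Delta> v)
    \<Longrightarrow> vertex_decomposable \<Delta>"

text \<open>d = dimension + 1 = largest face cardinality.\<close>
definition cdim :: "'a set set \<Rightarrow> nat" where
  "cdim \<Delta> = Max (card ` \<Delta>)"

definition fnum :: "'a set set \<Rightarrow> nat \<Rightarrow> nat" where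
  "fnum \<Delta> k = card {\<sigma>\<in>\<Delta>. card \<sigma> = k}"

text \<open>Face vector (f_{-1}, ..., f_{d-1}) as a list; entry k is f_{k-1}.\<close>
definition f_vector :: "'a set set \<Rightarrow> nat list" where
  "f_vector \<Delta> = map (fnum \<Delta>) [0..<cdim \<Delta> + 1]"

definition h_vector :: "'a set set \<Rightarrow> int list" where
  "h_vector \<Delta> = (let d = cdim \<Delta> in
     map (\<lambda>j. \<Sum>i=0..j. (-1) ^ (j - i) * int ((d - i) choose (j - i)) * int (fnum \<Delta> i))
       [0..<d + 1])"

definition strip_trailing_zeros :: "int list \<Rightarrow> int list" where
  "strip_trailing_zeros xs = rev (dropWhile (\<lambda>x. x = 0) (rev xs))"

end

theory Submission
  imports Defs
begin

(* The f-vector of every flag complex D is the h-vector (up to trailing zeros) of a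
   vertex-decomposable flag complex Gamma: the independence complex of the whiskered graph.
   Every vertex x of D is doubled into ev x and a whisker od x, and the faces of Gamma are the
   sets ev`A \<union> od`B with A \<in> D and A \<inter> B = {}. *)


section \<open>Binomial inversion\<close>

lemma alternating_binomial_sum:
  "(\<Sum>k=0..r. (-1::int)^(r-k) * int (r choose k)) = (if r = 0 then 1 else 0)"
proof -
  have "(1 + (-1::int))^r = (\<Sum>k\<le>r. of_nat (r choose k) * 1^k * (-1)^(r-k))"
    by (rule binomial_ring)
  then have "(\<Sum>k\<le>r. (-1::int)^(r-k) * int (r choose k)) = 0^r"
    by (simp add: mult.commute)
  then show ?thesis by (simp add: atMost_atLeast0)
qed

text \<open>The matrices with entries C(n-a, i-a) and (-1)^(j-i) C(n-i, j-i) are mutually inverse.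
  This is exactly what turns the face numbers of the whiskered complex into its h-vector.\<close>
lemma binomial_inversion:
  assumes "a \<le> n" "j \<le> n"
  shows "(\<Sum>i=0..j. (-1::int)^(j-i) * int ((n-i) choose (j-i)) *
            (if a \<le> i then int ((n-a) choose (i-a)) else 0)) = (if a = j then 1 else 0)"
proof (cases "a \<le> j")
  case False
  then show ?thesis by (subst sum.neutral) auto
next
  case True
  define r where "r = j - a"
  have product: "int ((n-i) choose (j-i)) * int ((n-a) choose (i-a))
                   = int ((n-a) choose r) * int (r choose (i-a))" if i: "i \<in> {a..j}" for i
  proof -
    have "((n-a) choose (j-a)) * ((j-a) choose (i-a))
            = ((n-a) choose (i-a)) * ((n-a-(i-a)) choose (j-a-(i-a)))"
      using i assms by (intro choose_mult) auto
    moreover have "n-a-(i-a) = n-i" "j-a-(i-a) = j-i" using i by auto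
    ultimately show ?thesis
      unfolding r_def by (metis of_nat_mult mult.commute)
  qed
  have "(\<Sum>i=0..j. (-1::int)^(j-i) * int ((n-i) choose (j-i)) *
            (if a \<le> i then int ((n-a) choose (i-a)) else 0))
      = (\<Sum>i=a..j. (-1::int)^(j-i) * int ((n-i) choose (j-i)) * int ((n-a) choose (i-a)))"
    by (rule sum.mono_neutral_cong_right) auto
  also have "\<dots> = int ((n-a) choose r) * (\<Sum>i=a..j. (-1::int)^(j-i) * int (r choose (i-a)))"
    by (simp add: sum_distrib_left product mult.left_commute mult.assoc)
  also have "(\<Sum>i=a..j. (-1::int)^(j-i) * int (r choose (i-a)))
               = (\<Sum>k=0..r. (-1::int)^(r-k) * int (r choose k))"
  proof -
    have "{a..j} = {0+a..r+a}" using True r_def by auto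
    then have "(\<Sum>i=a..j. (-1::int)^(j-i) * int (r choose (i-a)))
                 = (\<Sum>k=0..r. (-1::int)^(j-(k+a)) * int (r choose (k+a-a)))"
      by (simp only: sum.shift_bounds_cl_nat_ivl)
    also have "\<dots> = (\<Sum>k=0..r. (-1::int)^(r-k) * int (r choose k))"
      using True r_def by (intro sum.cong) (auto simp: add.commute)
    finally show ?thesis .
  qed
  also have "\<dots> = (if r = 0 then 1 else 0)" by (rule alternating_binomial_sum)
  finally show ?thesis using True r_def by auto
qed


section \<open>General facts on simplicial and flag complexes\<close>

lemma finite_vertices: "simplicial_complex D \<Longrightarrow> finite (vertices D)"
  unfolding simplicial_complex_def vertices_def by (intro finite_Union) auto

lemma minimal_nonface_below:
  assumes "finite T" "T \<subseteq> vertices D" "T \<notin> D"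
  shows "\<exists>\<sigma>\<subseteq>T. minimal_nonface D \<sigma>"
  using assms
proof (induction "card T" arbitrary: T rule: less_induct)
  case less
  show ?case
  proof (cases "\<forall>\<tau>. \<tau> \<subset> T \<longrightarrow> \<tau> \<in> D")
    case True
    then have "minimal_nonface D T" using less.prems unfolding minimal_nonface_def by blast
    then show ?thesis by blast
  next
    case False
    then obtain \<tau> where \<tau>: "\<tau> \<subset> T" "\<tau> \<notin> D" by blast
    have "card \<tau> < card T" using \<tau> less.prems(1) by (simp add: psubset_card_mono)
    moreover have "finite \<tau>" "\<tau> \<subseteq> vertices D" using \<tau>(1) less.prems(1,2) finite_subset by auto
    ultimately obtain \<sigma> where "\<sigma> \<subseteq> \<tau>" "minimal_nonface D \<sigma>" using less.hyps \<tau>(2) by blast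
    then show ?thesis using \<tau>(1) by blast
  qed
qed

lemma flag_complex_clique:
  assumes flag: "flag_complex D" and T: "T \<subseteq> vertices D"
    and pairs: "\<And>x y. x \<in> T \<Longrightarrow> y \<in> T \<Longrightarrow> x \<noteq> y \<Longrightarrow> {x, y} \<in> D"
  shows "T \<in> D"
proof (rule ccontr)
  assume "T \<notin> D"
  moreover have "finite T"
    using flag finite_vertices T finite_subset unfolding flag_complex_def by auto
  ultimately obtain \<sigma> where \<sigma>: "\<sigma> \<subseteq> T" "minimal_nonface D \<sigma>"
    using minimal_nonface_below[of T D] T by blast
  then have "card \<sigma> = 2" using flag unfolding flag_complex_def by blast
  then obtain x y where "\<sigma> = {x, y}" "x \<noteq> y" by (meson card_2_iff)
  then show False using pairs[of x y] \<sigma> unfolding minimal_nonface_def by blast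
qed

lemma flag_complex_insert:
  assumes flag: "flag_complex D" and A: "A \<in> D" and x: "x \<in> vertices D"
    and edges: "\<And>y. y \<in> A \<Longrightarrow> y \<noteq> x \<Longrightarrow> {x, y} \<in> D"
  shows "insert x A \<in> D"
proof (rule flag_complex_clique[OF flag])
  show "insert x A \<subseteq> vertices D" using A x unfolding vertices_def by blast
  have faces_below_A: "B \<in> D" if "B \<subseteq> A" for B
    using flag A that unfolding flag_complex_def simplicial_complex_def by blast
  show "{u, v} \<in> D" if "u \<in> insert x A" "v \<in> insert x A" "u \<noteq> v" for u v
    using that edges faces_below_A[of "{u, v}"] by (auto simp: insert_commute)
qed

lemma flag_complexI:
  assumes "simplicial_complex \<Gamma>"
    and clique: "\<And>T. T \<subseteq> vertices \<Gamma> \<Longrightarrow>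
                   (\<And>x y. x \<in> T \<Longrightarrow> y \<in> T \<Longrightarrow> x \<noteq> y \<Longrightarrow> {x, y} \<in> \<Gamma>) \<Longrightarrow> T \<in> \<Gamma>"
  shows "flag_complex \<Gamma>"
  unfolding flag_complex_def
proof (intro conjI allI impI)
  fix \<sigma> assume min: "minimal_nonface \<Gamma> \<sigma>"
  show "card \<sigma> = 2"
  proof (rule ccontr)
    assume card: "card \<sigma> \<noteq> 2"
    have "{x, y} \<in> \<Gamma>" if "x \<in> \<sigma>" "y \<in> \<sigma>" "x \<noteq> y" for x y
    proof -
      have "{x, y} \<noteq> \<sigma>" using card that(3) by auto
      then have "{x, y} \<subset> \<sigma>" using that by blast
      then show ?thesis using min unfolding minimal_nonface_def by blast
    qed
    then have "\<sigma> \<in> \<Gamma>" using clique min unfolding minimal_nonface_def by blast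
    then show False using min unfolding minimal_nonface_def by blast
  qed
qed fact

lemma card_le_cdim: "simplicial_complex D \<Longrightarrow> A \<in> D \<Longrightarrow> card A \<le> cdim D"
  unfolding simplicial_complex_def cdim_def by simp

lemma fnum_above_cdim:
  assumes "simplicial_complex D" "cdim D < k"
  shows "fnum D k = 0"
proof -
  have "{\<sigma>\<in>D. card \<sigma> = k} = {}" using assms card_le_cdim by fastforce
  then show ?thesis unfolding fnum_def by (simp only: card.empty)
qed

lemma fnum_cdim_pos:
  assumes "simplicial_complex D"
  shows "fnum D (cdim D) \<noteq> 0"
proof -
  have "finite (card ` D)" "card ` D \<noteq> {}"
    using assms unfolding simplicial_complex_def by auto
  then have "cdim D \<in> card ` D" unfolding cdim_def by (rule Max_in)
  moreover have "finite D" using assms unfolding simplicial_complex_def by blast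
  ultimately show ?thesis unfolding fnum_def by auto
qed

lemma cdim_le_card_vertices:
  assumes "simplicial_complex D"
  shows "cdim D \<le> card (vertices D)"
proof -
  have "card A \<le> card (vertices D)" if "A \<in> D" for A
    using that finite_vertices[OF assms] by (intro card_mono) (auto simp: vertices_def)
  then show ?thesis
    using assms unfolding cdim_def simplicial_complex_def by (intro Max.boundedI) auto
qed

lemma strip_trailing_zeros_append:
  assumes "x \<noteq> 0" "\<forall>z\<in>set zs. z = 0"
  shows "strip_trailing_zeros (xs @ x # zs) = xs @ [x]"
proof -
  have "dropWhile (\<lambda>z. z = 0) (rev zs @ x # rev xs) = x # rev xs"
    by (subst dropWhile_append2) (use assms in auto)
  then show ?thesis unfolding strip_trailing_zeros_def by simp
qed

lemma strip_padded_f_vector: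
  assumes D: "simplicial_complex D" and n: "cdim D \<le> n"
  shows "strip_trailing_zeros (map (\<lambda>j. int (fnum D j)) [0..<n+1]) = map int (f_vector D)"
proof -
  define c where "c = cdim D"
  have "[0..<n+1] = [0..<c] @ [c..<n+1]"
    using upt_add_eq_append[of 0 c "n+1-c"] n unfolding c_def by simp
  also have "[c..<n+1] = c # [c+1..<n+1]" using n unfolding c_def by (simp add: upt_conv_Cons)
  finally have "[0..<n+1] = [0..<c] @ c # [c+1..<n+1]" .
  then have "map (\<lambda>j. int (fnum D j)) [0..<n+1] =
      map (\<lambda>j. int (fnum D j)) [0..<c] @ int (fnum D c) # map (\<lambda>j. int (fnum D j)) [c+1..<n+1]"
    by simp
  also have "strip_trailing_zeros \<dots> = map (\<lambda>j. int (fnum D j)) [0..<c] @ [int (fnum D c)]"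
    using fnum_cdim_pos[OF D] fnum_above_cdim[OF D]
    by (intro strip_trailing_zeros_append) (auto simp: c_def)
  also have "\<dots> = map int (f_vector D)" unfolding f_vector_def c_def by simp
  finally show ?thesis .
qed


section \<open>Whiskered complexes\<close>

text \<open>The vertices of D are doubled by two injective maps ev, od with disjoint images:
  ev x is the vertex x itself, od x is the whisker attached to it.\<close>
locale vertex_doubling =
  fixes D :: "'a set set" and V :: "'a set" and ev od :: "'a \<Rightarrow> 'b"
  assumes complex: "simplicial_complex D" and V_vertices: "V = vertices D"
    and inj_ev: "inj_on ev V" and inj_od: "inj_on od V"
    and ev_neq_od: "\<And>x y. x \<in> V \<Longrightarrow> y \<in> V \<Longrightarrow> ev x \<noteq> od y"
begin

lemma finite_V: "finite V"
  using finite_vertices[OF complex] V_vertices by simp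

lemma face_subset_V: "A \<in> D \<Longrightarrow> A \<subseteq> V"
  unfolding V_vertices vertices_def by blast

lemma subface: "A \<in> D \<Longrightarrow> B \<subseteq> A \<Longrightarrow> B \<in> D"
  using complex unfolding simplicial_complex_def by blast

lemma empty_face: "{} \<in> D"
  using complex unfolding simplicial_complex_def by blast

lemma singleton_face: "x \<in> V \<Longrightarrow> {x} \<in> D"
  unfolding V_vertices vertices_def using subface by blast

lemma ev_mem_doubled:
  assumes "x \<in> V" "A \<subseteq> V" "B \<subseteq> V"
  shows "ev x \<in> ev`A \<union> od`B \<longleftrightarrow> x \<in> A"
proof -
  have "ev x \<notin> od`B" using ev_neq_od assms by blast
  then show ?thesis using inj_on_image_mem_iff[OF inj_ev assms(1,2)] by blast
qed

lemma od_mem_doubled: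
  assumes "x \<in> V" "A \<subseteq> V" "B \<subseteq> V"
  shows "od x \<in> ev`A \<union> od`B \<longleftrightarrow> x \<in> B"
proof -
  have "od x \<notin> ev`A" using ev_neq_od assms by (metis imageE subsetD)
  then show ?thesis using inj_on_image_mem_iff[OF inj_od assms(1,3)] by blast
qed

lemma doubled_eq_iff:
  assumes "A \<subseteq> V" "B \<subseteq> V" "A' \<subseteq> V" "B' \<subseteq> V"
  shows "ev`A \<union> od`B = ev`A' \<union> od`B' \<longleftrightarrow> A = A' \<and> B = B'"
proof
  assume eq: "ev`A \<union> od`B = ev`A' \<union> od`B'"
  have "x \<in> A \<longleftrightarrow> x \<in> A'" "x \<in> B \<longleftrightarrow> x \<in> B'" if "x \<in> V" for x
    using ev_mem_doubled[OF that] od_mem_doubled[OF that] assms eq by metis+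
  then show "A = A' \<and> B = B'" using assms by blast
qed simp

lemma card_doubled: "A \<subseteq> V \<Longrightarrow> B \<subseteq> V \<Longrightarrow> card (ev`A \<union> od`B) = card A + card B"
proof -
  assume AB: "A \<subseteq> V" "B \<subseteq> V"
  then have "finite A" "finite B" "ev`A \<inter> od`B = {}"
    using finite_V finite_subset ev_neq_od by fastforce+
  then have "card (ev`A \<union> od`B) = card (ev`A) + card (od`B)"
    by (simp add: card_Un_disjoint)
  also have "\<dots> = card A + card B"
    using AB inj_on_subset[OF inj_ev] inj_on_subset[OF inj_od] by (simp add: card_image)
  finally show ?thesis .
qed

lemma subset_doubled:
  "\<tau> \<subseteq> ev`A \<union> od`B \<Longrightarrow> \<tau> = ev`{x\<in>A. ev x \<in> \<tau>} \<union> od`{x\<in>B. od x \<in> \<tau>}"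
  by blast

text \<open>The partial whiskered complex: the vertices in W are present together with their whiskers,
  while of the vertices in S only the (then isolated) whiskers remain.  It is the independence
  complex of the corresponding induced subgraph of the whiskered graph.\<close>
definition whiskered :: "'a set \<Rightarrow> 'a set \<Rightarrow> 'b set set" where
  "whiskered W S = {ev`A \<union> od`B | A B. A \<in> D \<and> A \<subseteq> W \<and> B \<subseteq> W \<union> S \<and> A \<inter> B = {}}"

lemma whiskeredI:
  "A \<in> D \<Longrightarrow> A \<subseteq> W \<Longrightarrow> B \<subseteq> W \<union> S \<Longrightarrow> A \<inter> B = {} \<Longrightarrow> ev`A \<union> od`B \<in> whiskered W S"
  unfolding whiskered_def by blast

lemma whiskeredE:
  assumes "\<tau> \<in> whiskered W S" "W \<union> S \<subseteq> V"
  obtains A B where "\<tau> = ev`A \<union> od`B" "A \<in> D" "A \<subseteq> W" "B \<subseteq> W \<union> S" "A \<inter> B = {}"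
    "A \<subseteq> V" "B \<subseteq> V"
  using assms unfolding whiskered_def by blast

lemma whiskered_iff:
  assumes "W \<union> S \<subseteq> V" "A \<subseteq> V" "B \<subseteq> V"
  shows "ev`A \<union> od`B \<in> whiskered W S \<longleftrightarrow> A \<in> D \<and> A \<subseteq> W \<and> B \<subseteq> W \<union> S \<and> A \<inter> B = {}"
proof
  assume "ev`A \<union> od`B \<in> whiskered W S"
  then obtain A' B' where eq: "ev`A \<union> od`B = ev`A' \<union> od`B'" and A'B': "A' \<in> D" "A' \<subseteq> W"
    "B' \<subseteq> W \<union> S" "A' \<inter> B' = {}" "A' \<subseteq> V" "B' \<subseteq> V"
    using assms(1) by (rule whiskeredE)
  have "A = A'" "B = B'" using doubled_eq_iff[OF assms(2,3) A'B'(5,6)] eq by simp_all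
  then show "A \<in> D \<and> A \<subseteq> W \<and> B \<subseteq> W \<union> S \<and> A \<inter> B = {}"
    using A'B' by simp
qed (auto intro: whiskeredI)

lemma whiskered_simplicial:
  assumes WS: "W \<union> S \<subseteq> V"
  shows "simplicial_complex (whiskered W S)"
  unfolding simplicial_complex_def
proof (intro conjI ballI allI impI)
  have "whiskered W S \<subseteq> (\<lambda>(A, B). ev`A \<union> od`B) ` (D \<times> Pow V)"
    using WS face_subset_V unfolding whiskered_def by fast
  moreover have "finite D" using complex unfolding simplicial_complex_def by blast
  ultimately show "finite (whiskered W S)" using finite_V by (meson finite_SigmaI finite_Pow_iff
      finite_imageI finite_subset)
  show "{} \<in> whiskered W S" using whiskeredI[OF empty_face, of W "{}" S] by simp
next
  fix \<sigma> assume "\<sigma> \<in> whiskered W S"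
  then obtain A B where "\<sigma> = ev`A \<union> od`B" "A \<subseteq> V" "B \<subseteq> V"
    using WS by (rule whiskeredE)
  then show "finite \<sigma>" using finite_V finite_subset by blast
next
  fix \<sigma> \<tau> assume "\<sigma> \<in> whiskered W S" "\<tau> \<subseteq> \<sigma>"
  then obtain A B where "\<tau> \<subseteq> ev`A \<union> od`B" "A \<in> D" "A \<subseteq> W" "B \<subseteq> W \<union> S" "A \<inter> B = {}"
    using WS by (metis whiskeredE)
  then show "\<tau> \<in> whiskered W S"
    using subset_doubled[of \<tau> A B] subface[of A] whiskeredI[of "{x\<in>A. ev x \<in> \<tau>}" W
        "{x\<in>B. od x \<in> \<tau>}" S] by auto
qed

text \<open>All facets of whiskered W S have the same size |W \<union> S|: a face ev`A \<union> od`B missing some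
  y \<in> W \<union> S from A \<union> B can be enlarged by the whisker od y.\<close>
lemma whiskered_pure:
  assumes WS: "W \<union> S \<subseteq> V"
  shows "pure (whiskered W S)"
proof -
  have "card \<sigma> = card (W \<union> S)" if "\<sigma> \<in> facets (whiskered W S)" for \<sigma>
  proof -
    from that have \<sigma>: "\<sigma> \<in> whiskered W S"
      and maximal: "\<And>\<tau>. \<tau> \<in> whiskered W S \<Longrightarrow> \<sigma> \<subseteq> \<tau> \<Longrightarrow> \<tau> = \<sigma>"
      unfolding facets_def by auto
    obtain A B where AB: "\<sigma> = ev`A \<union> od`B" "A \<in> D" "A \<subseteq> W" "B \<subseteq> W \<union> S" "A \<inter> B = {}"
      "A \<subseteq> V" "B \<subseteq> V"
      using \<sigma> WS by (rule whiskeredE)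
    have cover: "A \<union> B = W \<union> S"
    proof (rule ccontr)
      assume "A \<union> B \<noteq> W \<union> S"
      then obtain y where y: "y \<in> W \<union> S" "y \<notin> A" "y \<notin> B" using AB by blast
      then have "ev`A \<union> od`(insert y B) \<in> whiskered W S"
        using AB by (intro whiskeredI) auto
      moreover have "\<sigma> \<subseteq> ev`A \<union> od`(insert y B)" using AB by blast
      ultimately have "od y \<in> \<sigma>" using maximal by blast
      then show False using od_mem_doubled[of y A B] y WS AB by blast
    qed
    have "card \<sigma> = card A + card B" using card_doubled AB by simp
    also have "\<dots> = card (W \<union> S)"
      using AB cover finite_V finite_subset by (metis card_Un_disjoint)
    finally show ?thesis .
  qed
  then show ?thesis unfolding pure_def by simp
qed

lemma whiskered_simplex:
  assumes "S \<subseteq> V"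
  shows "whiskered {} S = Pow (od`S)"
proof
  show "whiskered {} S \<subseteq> Pow (od`S)" unfolding whiskered_def by auto
  show "Pow (od`S) \<subseteq> whiskered {} S"
  proof
    fix \<tau> assume "\<tau> \<in> Pow (od`S)"
    then have "\<tau> = ev`{} \<union> od`{x\<in>S. od x \<in> \<tau>}" by auto
    moreover have "ev`{} \<union> od`{x\<in>S. od x \<in> \<tau>} \<in> whiskered {} S"
      by (rule whiskeredI[OF empty_face]) auto
    ultimately show "\<tau> \<in> whiskered {} S" by simp
  qed
qed

abbreviation Gamma :: "'b set set" where
  "Gamma \<equiv> whiskered V {}"

lemma Gamma_iff: "A \<subseteq> V \<Longrightarrow> B \<subseteq> V \<Longrightarrow> ev`A \<union> od`B \<in> Gamma \<longleftrightarrow> A \<in> D \<and> A \<inter> B = {}"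
  using whiskered_iff[of V "{}"] face_subset_V by auto

text \<open>The largest faces of Gamma have one vertex over every vertex of D.\<close>
lemma cdim_Gamma: "cdim Gamma = card V"
  unfolding cdim_def
proof (rule Max_eqI)
  show "finite (card ` Gamma)"
    using whiskered_simplicial[of V "{}"] unfolding simplicial_complex_def by simp
next
  fix k assume "k \<in> card ` Gamma"
  then obtain A B where AB: "k = card (ev`A \<union> od`B)" "A \<inter> B = {}" "A \<subseteq> V" "B \<subseteq> V"
    by (auto elim: whiskeredE)
  then have "k = card (A \<union> B)"
    using card_doubled finite_V finite_subset by (metis card_Un_disjoint)
  then show "k \<le> card V" using AB finite_V by (simp add: card_mono)
next
  have "od`V \<in> Gamma" using Gamma_iff[of "{}" V] empty_face by simp
  moreover have "card (od`V) = card V" using card_image[OF inj_od] .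
  ultimately show "card V \<in> card ` Gamma" by (metis image_eqI)
qed

lemma Gamma_faces_of_size:
  "{\<tau>\<in>Gamma. card \<tau> = i}
     = (\<lambda>(A, B). ev`A \<union> od`B) ` (SIGMA A:D. {B. B \<subseteq> V - A \<and> card A + card B = i})"
proof (intro set_eqI iffI)
  fix \<tau> assume "\<tau> \<in> {\<tau>\<in>Gamma. card \<tau> = i}"
  then obtain A B where "\<tau> = ev`A \<union> od`B" "A \<in> D" "A \<inter> B = {}" "A \<subseteq> V" "B \<subseteq> V"
    "card (ev`A \<union> od`B) = i"
    by (auto elim: whiskeredE)
  then show "\<tau> \<in> (\<lambda>(A, B). ev`A \<union> od`B) ` (SIGMA A:D. {B. B \<subseteq> V - A \<and> card A + card B = i})"
    using card_doubled by (auto intro!: image_eqI[of _ _ "(A, B)"])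
next
  fix \<tau> assume "\<tau> \<in> (\<lambda>(A, B). ev`A \<union> od`B) ` (SIGMA A:D. {B. B \<subseteq> V - A \<and> card A + card B = i})"
  then obtain A B where "\<tau> = ev`A \<union> od`B" "A \<in> D" "B \<subseteq> V - A" "card A + card B = i"
    by auto
  moreover from this have "A \<subseteq> V" "B \<subseteq> V" "A \<inter> B = {}" using face_subset_V by auto
  ultimately show "\<tau> \<in> {\<tau>\<in>Gamma. card \<tau> = i}"
    using Gamma_iff[of A B] card_doubled[of A B] by simp
qed

lemma fnum_Gamma:
  "fnum Gamma i = (\<Sum>A\<in>D. if card A \<le> i then (card V - card A) choose (i - card A) else 0)"
proof -
  define P where "P = (SIGMA A:D. {B. B \<subseteq> V - A \<and> card A + card B = i})"
  have "inj_on (\<lambda>(A, B). ev`A \<union> od`B) (Pow V \<times> Pow V)"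
  proof (rule inj_onI)
    fix p q assume "p \<in> Pow V \<times> Pow V" "q \<in> Pow V \<times> Pow V"
      and "(\<lambda>(A, B). ev`A \<union> od`B) p = (\<lambda>(A, B). ev`A \<union> od`B) q"
    then show "p = q" using doubled_eq_iff by (cases p, cases q) auto
  qed
  moreover have "P \<subseteq> Pow V \<times> Pow V" unfolding P_def using face_subset_V by auto
  ultimately have "inj_on (\<lambda>(A, B). ev`A \<union> od`B) P" by (rule inj_on_subset)
  then have "fnum Gamma i = card P"
    unfolding fnum_def Gamma_faces_of_size P_def by (rule card_image)
  also have "\<dots> = (\<Sum>A\<in>D. card {B. B \<subseteq> V - A \<and> card A + card B = i})"
    unfolding P_def using complex finite_V by (intro card_SigmaI) (auto simp: simplicial_complex_def)
  also have "\<dots> = (\<Sum>A\<in>D. if card A \<le> i then (card V - card A) choose (i - card A) else 0)"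
  proof (rule sum.cong[OF refl])
    fix A assume "A \<in> D"
    then have "card (V - A) = card V - card A"
      using face_subset_V finite_V finite_subset by (metis card_Diff_subset)
    moreover have "{B. B \<subseteq> V - A \<and> card A + card B = i}
        = (if card A \<le> i then {B. B \<subseteq> V - A \<and> card B = i - card A} else {})"
      by auto
    ultimately show "card {B. B \<subseteq> V - A \<and> card A + card B = i}
        = (if card A \<le> i then (card V - card A) choose (i - card A) else 0)"
      using n_subsets[of "V - A" "i - card A"] finite_V by simp
  qed
  finally show ?thesis .
qed

lemma int_fnum_Gamma:
  "int (fnum Gamma i) = (\<Sum>A\<in>D. if card A \<le> i then int ((card V - card A) choose (i - card A)) else 0)"
  unfolding fnum_Gamma of_nat_sum by (rule sum.cong) simp_all

text \<open>Binomial inversion of the face numbers: the h-vector of Gamma is the f-vector of D, padded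
  with zeros up to length |V| + 1.\<close>
lemma h_vector_Gamma: "h_vector Gamma = map (\<lambda>j. int (fnum D j)) [0..<card V + 1]"
  unfolding h_vector_def Let_def cdim_Gamma
proof (rule map_cong[OF refl])
  fix j assume "j \<in> set [0..<card V + 1]"
  then have j: "j \<le> card V" by auto
  define n where "n = card V"
  have card_face: "card A \<le> n" if "A \<in> D" for A
    unfolding n_def using card_mono[OF finite_V face_subset_V[OF that]] .
  have "(\<Sum>i=0..j. (-1)^(j-i) * int ((n-i) choose (j-i)) * int (fnum Gamma i))
      = (\<Sum>i=0..j. \<Sum>A\<in>D. (-1)^(j-i) * int ((n-i) choose (j-i)) *
           (if card A \<le> i then int ((n - card A) choose (i - card A)) else 0))"
    unfolding int_fnum_Gamma n_def by (simp add: sum_distrib_left)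
  also have "\<dots> = (\<Sum>A\<in>D. \<Sum>i=0..j. (-1)^(j-i) * int ((n-i) choose (j-i)) *
           (if card A \<le> i then int ((n - card A) choose (i - card A)) else 0))"
    by (rule sum.swap)
  also have "\<dots> = (\<Sum>A\<in>D. if card A = j then 1 else 0)"
    using binomial_inversion[OF card_face] j unfolding n_def by (intro sum.cong) simp_all
  also have "\<dots> = int (fnum D j)"
    using sum.inter_filter[of D "\<lambda>_. 1::int" "\<lambda>A. card A = j"] complex
    unfolding fnum_def simplicial_complex_def by simp
  finally show "(\<Sum>i=0..j. (-1)^(j-i) * int ((card V-i) choose (j-i)) * int (fnum Gamma i))
      = int (fnum D j)"
    unfolding n_def .
qed

lemma strip_h_vector_Gamma: "strip_trailing_zeros (h_vector Gamma) = map int (f_vector D)"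
proof -
  have "cdim D \<le> card V" using cdim_le_card_vertices[OF complex] V_vertices by simp
  then show ?thesis unfolding h_vector_Gamma by (rule strip_padded_f_vector[OF complex])
qed

end



section \<open>Whiskered complexes of flag complexes\<close>

locale flag_vertex_doubling = vertex_doubling +
  assumes flag: "flag_complex D"
begin

text \<open>The link of ev x for x \<in> W: the neighbours of x in D stay, its non-neighbours keep only
  their whisker (they cannot join ev x), and x disappears together with its whisker.  Flagness
  is what makes every face of the smaller complex extendable by ev x.\<close>
lemma link_whiskered:
  assumes WS: "W \<union> S \<subseteq> V" "W \<inter> S = {}" and x: "x \<in> W"
  shows "link (whiskered W S) (ev x)
           = whiskered {y\<in>W. y \<noteq> x \<and> {x, y} \<in> D} (S \<union> {y\<in>W. y \<noteq> x \<and> {x, y} \<notin> D})"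
    (is "_ = whiskered ?W ?S")
proof -
  have xV: "x \<in> V" using x WS by blast
  show ?thesis
  proof (intro set_eqI iffI)
    fix \<tau> assume "\<tau> \<in> link (whiskered W S) (ev x)"
    then have \<tau>: "\<tau> \<in> whiskered W S" "ev x \<notin> \<tau>" "insert (ev x) \<tau> \<in> whiskered W S"
      unfolding link_def by auto
    obtain A B where AB: "\<tau> = ev`A \<union> od`B" "A \<subseteq> V" "B \<subseteq> V"
      using \<tau>(1) WS(1) by (rule whiskeredE)
    have "x \<notin> A" using \<tau>(2) AB(1) by blast
    have "ev`(insert x A) \<union> od`B \<in> whiskered W S" using \<tau>(3) AB(1) by simp
    moreover have "insert x A \<subseteq> V" using xV AB(2) by blast
    ultimately have xA: "insert x A \<in> D" "insert x A \<subseteq> W" "B \<subseteq> W \<union> S" "insert x A \<inter> B = {}"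
      using whiskered_iff[OF WS(1) _ AB(3)] by blast+
    have "A \<subseteq> ?W"
      using xA(2) \<open>x \<notin> A\<close> subface[OF xA(1), of "{x, _}"] by blast
    moreover have "B \<subseteq> ?W \<union> ?S" using xA(3,4) by auto
    ultimately have "ev`A \<union> od`B \<in> whiskered ?W ?S"
      using xA subface[OF xA(1)] by (intro whiskeredI) auto
    then show "\<tau> \<in> whiskered ?W ?S" using AB(1) by simp
  next
    fix \<tau> assume "\<tau> \<in> whiskered ?W ?S"
    then obtain A B where AB: "\<tau> = ev`A \<union> od`B" "A \<in> D" "A \<subseteq> ?W" "B \<subseteq> ?W \<union> ?S"
      "A \<inter> B = {}" "A \<subseteq> V" "B \<subseteq> V"
      using WS by (elim whiskeredE) auto
    have "x \<notin> A" "x \<notin> B" using AB(3,4) x WS(2) by auto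
    have "insert x A \<in> D"
      by (rule flag_complex_insert[OF flag AB(2)]) (use xV V_vertices AB(3) in auto)
    then have "ev`(insert x A) \<union> od`B \<in> whiskered W S"
      using AB \<open>x \<notin> B\<close> x by (intro whiskeredI) auto
    moreover have "ev`A \<union> od`B \<in> whiskered W S" using AB by (intro whiskeredI) auto
    moreover have "ev x \<notin> ev`A \<union> od`B" using ev_mem_doubled xV AB \<open>x \<notin> A\<close> by blast
    ultimately show "\<tau> \<in> link (whiskered W S) (ev x)"
      unfolding link_def AB(1) by auto
  qed
qed

lemma del_whiskered:
  assumes WS: "W \<union> S \<subseteq> V" and x: "x \<in> W"
  shows "del (whiskered W S) (ev x) = whiskered (W - {x}) (insert x S)"
proof (intro set_eqI iffI)
  fix \<tau> assume "\<tau> \<in> del (whiskered W S) (ev x)"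
  then have \<tau>: "\<tau> \<in> whiskered W S" "ev x \<notin> \<tau>" unfolding del_def by auto
  then obtain A B where AB: "\<tau> = ev`A \<union> od`B" "A \<in> D" "A \<subseteq> W" "B \<subseteq> W \<union> S"
    "A \<inter> B = {}"
    using WS by (elim whiskeredE)
  then have "ev`A \<union> od`B \<in> whiskered (W - {x}) (insert x S)"
    using \<tau>(2) by (intro whiskeredI) auto
  then show "\<tau> \<in> whiskered (W - {x}) (insert x S)" using AB(1) by simp
next
  fix \<tau> assume "\<tau> \<in> whiskered (W - {x}) (insert x S)"
  then obtain A B where AB: "\<tau> = ev`A \<union> od`B" "A \<in> D" "A \<subseteq> W - {x}"
    "B \<subseteq> (W - {x}) \<union> insert x S" "A \<inter> B = {}" "A \<subseteq> V" "B \<subseteq> V"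
    using WS x by (elim whiskeredE) auto
  then have "ev`A \<union> od`B \<in> whiskered W S" using x by (intro whiskeredI) auto
  moreover have "ev x \<notin> ev`A \<union> od`B" using ev_mem_doubled x WS AB by blast
  ultimately show "\<tau> \<in> del (whiskered W S) (ev x)" unfolding del_def AB(1) by blast
qed

text \<open>Shedding the vertices of W one at a time: link and deletion are partial whiskered
  complexes with fewer remaining vertices, all of them pure.\<close>
lemma whiskered_vertex_decomposable:
  assumes "W \<union> S \<subseteq> V" "W \<inter> S = {}"
  shows "vertex_decomposable (whiskered W S)"
  using assms
proof (induction "card W" arbitrary: W S rule: less_induct)
  case less
  have "finite W" using less.prems finite_V finite_subset by blast
  show ?case
  proof (cases "W = {}")
    case True
    have "finite (od ` S)" using less.prems finite_V finite_subset by blast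
    then show ?thesis using whiskered_simplex less.prems(1) True vertex_decomposable.simplex
      by fastforce
  next
    case False
    then obtain x where x: "x \<in> W" by blast
    then have xV: "x \<in> V" using less.prems by blast
    define W' where "W' = {y\<in>W. y \<noteq> x \<and> {x, y} \<in> D}"
    define S' where "S' = S \<union> {y\<in>W. y \<noteq> x \<and> {x, y} \<notin> D}"
    have link: "link (whiskered W S) (ev x) = whiskered W' S'"
      unfolding W'_def S'_def using link_whiskered less.prems x by blast
    have del: "del (whiskered W S) (ev x) = whiskered (W - {x}) (insert x S)"
      using del_whiskered less.prems x by blast
    have smaller: "card W' < card W" "card (W - {x}) < card W"
      unfolding W'_def using x \<open>finite W\<close>
      by (auto intro!: psubset_card_mono simp del: card_Diff_insert)
    have subsets: "W' \<union> S' \<subseteq> V" "W' \<inter> S' = {}"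
        "(W - {x}) \<union> insert x S \<subseteq> V" "(W - {x}) \<inter> insert x S = {}"
      using less.prems x unfolding W'_def S'_def by auto
    have "ev`{x} \<union> od`{} \<in> whiskered W S"
      using singleton_face[OF xV] x by (intro whiskeredI) auto
    then have "ev x \<in> vertices (whiskered W S)" unfolding vertices_def by auto
    then show ?thesis
    proof (rule vertex_decomposable.step[OF whiskered_pure[OF less.prems(1)]])
      show "pure (link (whiskered W S) (ev x))"
        unfolding link by (rule whiskered_pure[OF subsets(1)])
      show "pure (del (whiskered W S) (ev x))"
        unfolding del by (rule whiskered_pure[OF subsets(3)])
      show "vertex_decomposable (link (whiskered W S) (ev x))"
        unfolding link by (rule less.hyps[OF smaller(1) subsets(1,2)])
      show "vertex_decomposable (del (whiskered W S) (ev x))"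
        unfolding del by (rule less.hyps[OF smaller(2) subsets(3,4)])
    qed
  qed
qed

lemma vertex_decomposable_Gamma: "vertex_decomposable Gamma"
  using whiskered_vertex_decomposable[of V "{}"] by simp

text \<open>Gamma is flag: a vertex set all of whose pairs are faces contains no pair ev x, od x of
  a vertex and its whisker, and its ev-part is a face of D by flagness of D.\<close>
lemma flag_Gamma: "flag_complex Gamma"
proof (rule flag_complexI)
  show "simplicial_complex Gamma" by (rule whiskered_simplicial) simp
  fix T assume T: "T \<subseteq> vertices Gamma"
    and pairs: "\<And>x y. x \<in> T \<Longrightarrow> y \<in> T \<Longrightarrow> x \<noteq> y \<Longrightarrow> {x, y} \<in> Gamma"
  define A where "A = {x\<in>V. ev x \<in> T}"
  define B where "B = {x\<in>V. od x \<in> T}"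
  have AB: "A \<subseteq> V" "B \<subseteq> V" unfolding A_def B_def by auto
  have "vertices Gamma \<subseteq> ev`V \<union> od`V"
    unfolding vertices_def by (auto elim!: whiskeredE)
  then have T_eq: "T = ev`A \<union> od`B"
    using subset_doubled[of T V V] T unfolding A_def B_def by blast
  have "A \<inter> B = {}"
  proof (rule ccontr)
    assume "A \<inter> B \<noteq> {}"
    then obtain x where x: "x \<in> V" "ev x \<in> T" "od x \<in> T" unfolding A_def B_def by blast
    then have "{ev x, od x} \<in> Gamma" using pairs ev_neq_od by simp
    then have "ev`{x} \<union> od`{x} \<in> Gamma" by (simp add: insert_commute)
    then show False using Gamma_iff x(1) by blast
  qed
  moreover have "A \<in> D"
  proof (rule flag_complex_clique[OF flag])
    show "A \<subseteq> vertices D" using AB V_vertices by blast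
    fix u v assume uv: "u \<in> A" "v \<in> A" "u \<noteq> v"
    then have "ev u \<noteq> ev v" using inj_onD[OF inj_ev] AB by blast
    then have "ev`{u, v} \<union> od`{} \<in> Gamma" using pairs uv unfolding A_def by simp
    then show "{u, v} \<in> D" using Gamma_iff[of "{u, v}" "{}"] uv AB by auto
  qed
  ultimately show "T \<in> Gamma" using T_eq AB Gamma_iff by blast
qed

end


lemma doubling_into_nat:
  assumes "finite V"
  obtains ev od :: "'a \<Rightarrow> nat"
  where "inj_on ev V" "inj_on od V" "\<And>x y. x \<in> V \<Longrightarrow> y \<in> V \<Longrightarrow> ev x \<noteq> od y"
proof -
  obtain e :: "'a \<Rightarrow> nat" where e: "inj_on e V"
    using ex_bij_betw_finite_nat[OF assms] bij_betw_imp_inj_on by blast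
  have "inj_on (\<lambda>x. 2 * e x) V" "inj_on (\<lambda>x. 2 * e x + 1) V"
    using e by (auto simp: inj_on_def)
  moreover have "2 * e x \<noteq> 2 * e y + 1" for x y by presburger
  ultimately show ?thesis by (rule that)
qed

theorem corollary3p7:
  fixes \<Delta> :: "'a set set"
  assumes "flag_complex \<Delta>"
  shows "\<exists>\<Gamma> :: nat set set. flag_complex \<Gamma> \<and> vertex_decomposable \<Gamma> \<and>
           strip_trailing_zeros (h_vector \<Gamma>) = map int (f_vector \<Delta>)"
proof -
  have complex: "simplicial_complex \<Delta>" using assms unfolding flag_complex_def by blast
  obtain ev od :: "'a \<Rightarrow> nat" where codes: "inj_on ev (vertices \<Delta>)" "inj_on od (vertices \<Delta>)"
    "\<And>x y. x \<in> vertices \<Delta> \<Longrightarrow> y \<in> vertices \<Delta> \<Longrightarrow> ev x \<noteq> od y"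
    using doubling_into_nat[OF finite_vertices[OF complex]] by blast
  interpret flag_vertex_doubling \<Delta> "vertices \<Delta>" ev od
    using assms complex codes by unfold_locales auto
  show ?thesis using flag_Gamma vertex_decomposable_Gamma strip_h_vector_Gamma by blast
qed

end
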